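(* Let $L$ be a finite unramified extension of $\mathbb Q_\ell$ with ring of integers $S$, and let $\nu$ be the valuation on $L$ normalized by $\nu(\ell)=1$. Let $T$ be a free $S$-module of finite rank $d$ and $x$ an $S$-linear endomorphism of $T$ whose reduction $\bar x$ on $T/\ell T$ is nilpotent. Let $Q(t)=\det(t-x\mid T\otimes_S L)\in S[t]$. Then the Newton polygon $\mathrm{Np}(Q)$ lies on or above the Young polygon $\mathrm{Hp}(x|T)$.
   Context: Young polygon: for a nilpotent $d\times d$ matrix (or endomorphism) $N$ over a field with Jordan block sizes $m_1\ge m_2\ge\dots\ge m_r$ (so $\sum m_j=d$), $\mathrm{Hp}(N)$ is the piecewise linear function on $[0,d]$ whose graph is the polygon with vertices $(\sum_{j=1}^i m_j,\, i)$, $0\le i\le r$; its slopes are $1/m_1\le\dots\le 1/m_r$. We write $\mathrm{Hp}(N)=(m_1,\dots,m_r)$. For $x$ an $S$-linear endomorphism of a free $S$-module $T$ inducing a nilpotent endomorphism of the $S/\ell S$-vector space $T/\ell T$, $\mathrm{Hp}(x|T)$ denotes the Young polygon of that induced endomorphism. Newton polygon: for $Q(t)=\sum_{i=0}^d Q_it^{d-i}$ monic of degree $d$ over $L$ (with $\nu(0)=+\infty$), $\mathrm{Np}(Q)$ is the largest convex function $\phi$ on $[0,d]$ with $\phi(i)\le \nu(Q_i)$ for all $0\le i\le d$ (the lower boundary of the convex hull of the points $(i,\nu(Q_i))$). "$\mathrm{Np}(Q)$ lies on or above $\mathrm{Hp}(N)$" means $\mathrm{Np}(Q)(s)\ge \mathrm{Hp}(N)(s)$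 for all $s\in[0,d]$. *)

theory Defs
  imports "HOL-Analysis.Convex" "HOL-Library.Extended_Real" "Jordan_Normal_Form.Jordan_Normal_Form"
begin

text \<open>A valuation is given on the nonzero elements as an integer-valued function;
  the value at 0 is irrelevant and is treated as +infinity everywhere below.\<close>

definition discrete_valuation :: "('a::field \<Rightarrow> int) \<Rightarrow> bool" where
  "discrete_valuation nu \<longleftrightarrow>
     (\<forall>x y. x \<noteq> 0 \<longrightarrow> y \<noteq> 0 \<longrightarrow> nu (x * y) = nu x + nu y) \<and>
     (\<forall>x y. x \<noteq> 0 \<longrightarrow> y \<noteq> 0 \<longrightarrow> x + y \<noteq> 0 \<longrightarrow> nu (x + y) \<ge> min (nu x) (nu y))"

definition val_ring :: "('a::field \<Rightarrow> int) \<Rightarrow> 'a set" where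
  "val_ring nu = {x. x = 0 \<or> nu x \<ge> 0}"

text \<open>x is congruent to y modulo l^n S (with nu(l) = 1, l^n S = {z. z = 0 or nu z >= n})\<close>
definition val_cong :: "('a::field \<Rightarrow> int) \<Rightarrow> int \<Rightarrow> 'a \<Rightarrow> 'a \<Rightarrow> bool" where
  "val_cong nu n x y \<longleftrightarrow> x - y = 0 \<or> nu (x - y) \<ge> n"

definition val_complete :: "('a::field \<Rightarrow> int) \<Rightarrow> bool" where
  "val_complete nu \<longleftrightarrow>
     (\<forall>f :: nat \<Rightarrow> 'a. (\<forall>N. \<exists>M. \<forall>m\<ge>M. \<forall>n\<ge>M. val_cong nu N (f m) (f n)) \<longrightarrow>
        (\<exists>y. \<forall>N. \<exists>M. \<forall>n\<ge>M. val_cong nu N (f n) y))"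

text \<open>L is a finite unramified extension of Q_l with valuation normalized by nu(l) = 1:
  a complete discretely valued field of characteristic 0 with finite residue field
  in which l is a uniformizer (nu l = 1).\<close>
definition unramified_l_adic_field :: "nat \<Rightarrow> ('a::field_char_0 \<Rightarrow> int) \<Rightarrow> bool" where
  "unramified_l_adic_field l nu \<longleftrightarrow>
     prime l \<and> discrete_valuation nu \<and> nu (of_nat l) = 1 \<and> val_complete nu \<and>
     finite (val_ring nu // {(x, y). x \<in> val_ring nu \<and> y \<in> val_ring nu \<and> val_cong nu 1 x y})"

definition integral_mat :: "('a::field \<Rightarrow> int) \<Rightarrow> 'a mat \<Rightarrow> bool" where
  "integral_mat nu A \<longleftrightarrow> (\<forall>i < dim_row A. \<forall>j < dim_col A. A $$ (i, j) \<in> val_ring nu)"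

definition mat_cong_l :: "('a::field \<Rightarrow> int) \<Rightarrow> 'a mat \<Rightarrow> 'a mat \<Rightarrow> bool" where
  "mat_cong_l nu A B \<longleftrightarrow> dim_row A = dim_row B \<and> dim_col A = dim_col B \<and>
     (\<forall>i < dim_row A. \<forall>j < dim_col A. val_cong nu 1 (A $$ (i, j)) (B $$ (i, j)))"

definition reduction_nilpotent :: "('a::field \<Rightarrow> int) \<Rightarrow> 'a mat \<Rightarrow> bool" where
  "reduction_nilpotent nu A \<longleftrightarrow> (\<exists>k. mat_cong_l nu (A ^\<^sub>m k) (0\<^sub>m (dim_row A) (dim_row A)))"

text \<open>ms is the list of Jordan block sizes (decreasing) of the reduction of A:
  after an integral change of basis (P invertible over S), A reduces mod l to the
  nilpotent Jordan matrix with blocks ms.  (Every invertible matrix over S/lS lifts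
  to such a P, so this is exactly the Jordan form of the reduction.)\<close>
definition reduction_jordan_type :: "('a::field \<Rightarrow> int) \<Rightarrow> 'a mat \<Rightarrow> nat list \<Rightarrow> bool" where
  "reduction_jordan_type nu A ms \<longleftrightarrow>
     sorted_wrt (\<ge>) ms \<and> (\<forall>m \<in> set ms. m > 0) \<and>
     (\<exists>P Pi. P \<in> carrier_mat (dim_row A) (dim_row A) \<and> Pi \<in> carrier_mat (dim_row A) (dim_row A) \<and>
        integral_mat nu P \<and> integral_mat nu Pi \<and> P * Pi = 1\<^sub>m (dim_row A) \<and>
        mat_cong_l nu (Pi * A * P) (jordan_matrix (map (\<lambda>m. (m, 0)) ms)))"

text \<open>Young polygon Hp(m_1,...,m_r): piecewise linear, vertices (m_1+...+m_i, i).\<close>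
fun young_polygon :: "nat list \<Rightarrow> real \<Rightarrow> real" where
  "young_polygon [] s = 0"
| "young_polygon (m # ms) s =
     (if s \<le> real m then s / real m else 1 + young_polygon ms (s - real m))"

text \<open>Newton polygon of a monic Q of degree d, Q(t) = sum_i Q_i t^(d-i): the largest convex
  function phi on [0,d] with phi(i) <= nu(Q_i) (no condition where Q_i = 0, nu(0) = +infinity),
  realised as the pointwise supremum of all such functions (with values in ereal).\<close>
definition newton_polygon :: "('a::field \<Rightarrow> int) \<Rightarrow> 'a poly \<Rightarrow> real \<Rightarrow> ereal" where
  "newton_polygon nu Q s =
     (SUP phi \<in> {phi. convex_on {0..real (degree Q)} phi \<and>
                 (\<forall>i \<le> degree Q. coeff Q (degree Q - i) \<noteq> 0 \<longrightarrow>
                    phi (real i) \<le> real_of_int (nu (coeff Q (degree Q - i))))}.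
        ereal (phi s))"

end

theory Submission
  imports Defs
begin

(* Conjugate A by the integral change of basis P, so that B = P^-1 A P is congruent
   mod l to the nilpotent Jordan matrix J with blocks ms; A and B have the same characteristic
   polynomial Q of degree d = sum ms.  For each m >= 1 we bound the m-weighted Gauss valuation of
   Q = det (t I - B): every nonzero coefficient c_j of t^j satisfies
        m * nu(c_j) + j >= K_m,    K_m = sum_i min(m_i, m)  (= dim ker N^m for N = J).
   This comes from the Leibniz expansion: each entry of t I - B has a weighted bound w(i,k)
   read off from J, and for every permutation p the sum of w(i, p i) dominates K_m thanks to a
   "potential" f on the indices with w(i,k) >= c(i) + f(k) - f(i) and sum_i c(i) = K_m.
   In terms of the Newton polygon, the weighted bound says that the line
   s |-> (K_m - d + s) / m lies below every point (i, nu(Q_i)).  The maximum of these lines is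
   convex, hence lies below Np(Q); and the Young polygon lies below that maximum because each of
   its edges (slope 1/m for m among the block sizes) lies on one of the lines. *)

lemma val_mult:
  assumes "discrete_valuation nu" "x \<noteq> 0" "y \<noteq> 0" shows "nu (x * y) = nu x + nu y"
  using assms unfolding discrete_valuation_def by blast

lemma val_add:
  assumes "discrete_valuation nu" "x \<noteq> 0" "y \<noteq> 0" "x + y \<noteq> 0"
  shows "nu (x + y) \<ge> min (nu x) (nu y)"
  using assms unfolding discrete_valuation_def by blast

lemma val_one: assumes "discrete_valuation nu" shows "nu 1 = 0"
  using val_mult[OF assms, of 1 1] by simp

lemma val_minus_one: assumes "discrete_valuation nu" shows "nu (-1) = 0"
  using val_mult[OF assms, of "-1" "-1"] val_one[OF assms] by simp

lemma val_uminus: assumes "discrete_valuation nu" "x \<noteq> 0" shows "nu (-x) = nu x"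
  using val_mult[OF assms(1), of "-1" x] val_minus_one[OF assms(1)] assms(2) by simp

text \<open>Ultrametric inequality for finite sums, phrased for an arbitrary upward closed
  condition P on valuations (the zero element satisfies every such condition).\<close>
lemma val_sum:
  assumes dv: "discrete_valuation nu" and fin: "finite S"
    and terms: "\<forall>i\<in>S. f i = 0 \<or> P (nu (f i))" and up: "\<And>x y. P x \<Longrightarrow> x \<le> y \<Longrightarrow> P y"
  shows "sum f S = 0 \<or> P (nu (sum f S))"
  using fin terms
proof (induction S rule: finite_induct)
  case empty then show ?case by simp
next
  case (insert a S)
  have ha: "f a = 0 \<or> P (nu (f a))" and hs: "sum f S = 0 \<or> P (nu (sum f S))"
    using insert by auto
  have eq: "sum f (insert a S) = f a + sum f S" using insert by simp
  show ?case
  proof (cases "f a = 0 \<or> sum f S = 0 \<or> f a + sum f S = 0")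
    case True then show ?thesis using ha hs eq by auto
  next
    case False
    then have "nu (f a + sum f S) \<ge> min (nu (f a)) (nu (sum f S))"
      using val_add[OF dv] by blast
    moreover have "P (min (nu (f a)) (nu (sum f S)))" using ha hs False by (simp add: min_def)
    ultimately show ?thesis using up eq by metis
  qed
qed

lemma val_cong_one_integral:
  assumes dv: "discrete_valuation nu" and cong: "val_cong nu 1 b 1"
  shows "b = 0 \<or> 0 \<le> nu b"
proof (cases "b = 1 \<or> b = 0")
  case True then show ?thesis using val_one[OF dv] by auto
next
  case False
  then have "nu (b - 1 + 1) \<ge> min (nu (b - 1)) (nu 1)"
    using val_add[OF dv, of "b - 1" 1] by simp
  then show ?thesis using cong False val_one[OF dv] unfolding val_cong_def by simp
qed

section \<open>Weighted valuation bounds for polynomials\<close>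

text \<open>For m > 0 this says that the points
  (j, nu c_j) lie on or above the line of slope -1/m through (N, 0).\<close>
definition wbound :: "('a::field \<Rightarrow> int) \<Rightarrow> int \<Rightarrow> 'a poly \<Rightarrow> int \<Rightarrow> bool" where
  "wbound nu m p N \<longleftrightarrow> (\<forall>j. coeff p j \<noteq> 0 \<longrightarrow> N \<le> m * nu (coeff p j) + int j)"

lemma wbound_mono: "wbound nu m p N \<Longrightarrow> N' \<le> N \<Longrightarrow> wbound nu m p N'"
  unfolding wbound_def by force

lemma weighted_upclosed:
  "(m::int) \<ge> 0 \<Longrightarrow> N \<le> m * x + n \<Longrightarrow> x \<le> y \<Longrightarrow> N \<le> m * y + n"
  by (meson add_le_cancel_right mult_left_mono order_trans)

lemma wbound_sum:
  assumes dv: "discrete_valuation nu" and m: "m \<ge> 0" and fin: "finite S"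
    and terms: "\<forall>x\<in>S. wbound nu m (f x) N"
  shows "wbound nu m (sum f S) N"
  unfolding wbound_def
proof (intro allI impI)
  fix n assume nz: "coeff (sum f S) n \<noteq> 0"
  have "\<forall>x\<in>S. coeff (f x) n = 0 \<or> N \<le> m * nu (coeff (f x) n) + int n"
    using terms unfolding wbound_def by blast
  then have "(\<Sum>x\<in>S. coeff (f x) n) = 0 \<or> N \<le> m * nu (\<Sum>x\<in>S. coeff (f x) n) + int n"
    by (rule val_sum[where P = "\<lambda>x. N \<le> m * x + int n", OF dv fin])
      (rule weighted_upclosed[OF m])
  then show "N \<le> m * nu (coeff (sum f S) n) + int n" using nz by (simp add: coeff_sum)
qed

lemma wbound_mult:
  assumes dv: "discrete_valuation nu" and m: "m \<ge> 0"
    and p: "wbound nu m p N" and q: "wbound nu m q M"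
  shows "wbound nu m (p * q) (N + M)"
  unfolding wbound_def
proof (intro allI impI)
  fix n assume nz: "coeff (p * q) n \<noteq> 0"
  have "\<forall>i\<in>{..n}. coeff p i * coeff q (n - i) = 0 \<or>
                   N + M \<le> m * nu (coeff p i * coeff q (n - i)) + int n"
  proof
    fix i assume i: "i \<in> {..n}"
    show "coeff p i * coeff q (n - i) = 0 \<or> N + M \<le> m * nu (coeff p i * coeff q (n - i)) + int n"
    proof (cases "coeff p i = 0 \<or> coeff q (n - i) = 0")
      case False
      have "N \<le> m * nu (coeff p i) + int i" and "M \<le> m * nu (coeff q (n - i)) + int (n - i)"
        using p q False unfolding wbound_def by blast+
      then show ?thesis using i val_mult[OF dv] False by (auto simp: distrib_left)
    qed auto
  qed
  then have "(\<Sum>i\<le>n. coeff p i * coeff q (n - i)) = 0 \<or>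
             N + M \<le> m * nu (\<Sum>i\<le>n. coeff p i * coeff q (n - i)) + int n"
    by (rule val_sum[where P = "\<lambda>x. N + M \<le> m * x + int n", OF dv finite_atMost])
      (rule weighted_upclosed[OF m])
  with nz show "N + M \<le> m * nu (coeff (p * q) n) + int n" by (simp add: coeff_mult)
qed

lemma wbound_prod:
  assumes dv: "discrete_valuation nu" and m: "m \<ge> 0" and fin: "finite S"
    and factors: "\<forall>x\<in>S. wbound nu m (f x) (w x)"
  shows "wbound nu m (prod f S) (sum w S)"
  using fin factors
proof (induction S rule: finite_induct)
  case empty then show ?case using val_one[OF dv] by (simp add: wbound_def coeff_1)
next
  case (insert a S) then show ?case using wbound_mult[OF dv m] by simp
qed

lemma wbound_const:
  assumes "c = 0 \<or> nu c \<ge> e" and m: "m \<ge> 0"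
  shows "wbound nu m [:c:] (m * e)"
  using assms mult_left_mono[OF _ m] unfolding wbound_def by (auto simp: coeff_pCons split: nat.split)

lemma wbound_monic_linear:
  assumes dv: "discrete_valuation nu" and m: "m \<ge> 1" and b: "b = 0 \<or> 1 \<le> nu b"
  shows "wbound nu m [:- b, 1:] 1"
  unfolding wbound_def
proof (intro allI impI)
  fix j assume nz: "coeff [:- b, 1:] j \<noteq> 0"
  show "1 \<le> m * nu (coeff [:- b, 1:] j) + int j"
  proof (cases j)
    case 0
    then have "1 \<le> nu (- b)" using nz b val_uminus[OF dv] by simp
    then have "1 * 1 \<le> m * nu (- b)" using mult_mono[of 1 m 1 "nu (- b)"] m by simp
    then show ?thesis using 0 by simp
  next
    case (Suc j')
    then show ?thesis using nz val_one[OF dv] by (cases j') auto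
  qed
qed

text \<open>Leibniz expansion with a potential: if each entry M(i,k) of a polynomial matrix has
  weighted bound w(i,k) and w(i,k) >= c(i) + f(k) - f(i), then along every permutation the
  potential terms telescope away, so det M has weighted bound sum_i c(i).\<close>
lemma det_wbound:
  fixes M :: "'a::field poly mat"
  assumes dv: "discrete_valuation nu" and m: "m \<ge> 0" and M: "M \<in> carrier_mat d d"
    and entries: "\<And>i k. i < d \<Longrightarrow> k < d \<Longrightarrow> wbound nu m (M $$ (i, k)) (w i k)"
    and potential: "\<And>i k. i < d \<Longrightarrow> k < d \<Longrightarrow> c i + f k - f i \<le> w i k"
  shows "wbound nu m (det M) (\<Sum>i<d. c i)"
proof -
  have sign: "wbound nu m (signof p :: 'a poly) 0" for p
    using wbound_const[where c = "of_int (sign p)" and e = 0 and nu = nu, OF _ m]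
      val_one[OF dv] val_minus_one[OF dv]
    by (auto simp: of_int_poly sign_def)
  have summand: "wbound nu m (signof p * (\<Prod>i = 0..<d. M $$ (i, p i))) (\<Sum>i<d. c i)"
    if p: "p permutes {0..<d}" for p
  proof -
    have "wbound nu m (\<Prod>i = 0..<d. M $$ (i, p i)) (\<Sum>i = 0..<d. w i (p i))"
      by (rule wbound_prod[OF dv m]) (use entries permutes_in_image[OF p] in auto)
    then have prod:
      "wbound nu m (signof p * (\<Prod>i = 0..<d. M $$ (i, p i))) (\<Sum>i = 0..<d. w i (p i))"
      using wbound_mult[OF dv m sign] by fastforce
    have "(\<Sum>i = 0..<d. f (p i)) = (\<Sum>i = 0..<d. f i)"
      using sum.reindex_bij_betw[OF permutes_imp_bij[OF p]] by simp
    moreover have "(\<Sum>i = 0..<d. c i + f (p i) - f i) \<le> (\<Sum>i = 0..<d. w i (p i))"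
      by (rule sum_mono) (use potential permutes_in_image[OF p] in auto)
    ultimately have "(\<Sum>i<d. c i) \<le> (\<Sum>i = 0..<d. w i (p i))"
      by (simp add: sum.distrib sum_subtractf lessThan_atLeast0)
    then show ?thesis using wbound_mono[OF prod] by blast
  qed
  show ?thesis
    unfolding det_def using M by (auto intro!: wbound_sum[OF dv m] summand simp: finite_permutations)
qed

section \<open>Weights and potentials attached to a nilpotent Jordan matrix\<close>

abbreviation jordan_nilp :: "nat list \<Rightarrow> 'a::{zero,one} mat" where
  "jordan_nilp ns \<equiv> jordan_matrix (map (\<lambda>n. (n, 0)) ns)"

fun block_weight :: "nat \<Rightarrow> nat list \<Rightarrow> nat \<Rightarrow> int" where
  "block_weight m [] j = 0"
| "block_weight m (n # ns) j =
     (if j < n then (if j + 1 < m \<or> j + 1 = n then 1 else 0) else block_weight m ns (j - n))"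

fun block_potential :: "nat \<Rightarrow> nat list \<Rightarrow> nat \<Rightarrow> int" where
  "block_potential m [] j = 0"
| "block_potential m (n # ns) j =
     (if j < n then - int (min j (m - 1)) else block_potential m ns (j - n))"

lemma block_weight_le_one: "block_weight m ns j \<le> 1"
  by (induction ns arbitrary: j) auto

lemma block_potential_bounds: "- int (m - 1) \<le> block_potential m ns j \<and> block_potential m ns j \<le> 0"
  by (induction ns arbitrary: j) auto

text \<open>kernel_dim ns m = sum_i min(n_i, m) is the dimension of the kernel of the m-th power of
  the nilpotent Jordan matrix with blocks ns; it is the total weight of the positions.\<close>
definition kernel_dim :: "nat list \<Rightarrow> nat \<Rightarrow> int" where
  "kernel_dim ns m = (\<Sum>n\<leftarrow>ns. int (min n m))"

lemma single_block_weight: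
  assumes m: "m > 0"
  shows "(\<Sum>j<n. (if j + 1 < m \<or> j + 1 = n then 1 else 0 :: int)) = int (min n m)"
proof (cases "n = 0")
  case False
  have S: "{j. j < n \<and> (j + 1 < m \<or> j + 1 = n)} = {0..<min n m - 1} \<union> {n - 1}"
    using False m by auto
  have "(\<Sum>j<n. (if j + 1 < m \<or> j + 1 = n then 1 else 0 :: int))
      = int (card {j. j < n \<and> (j + 1 < m \<or> j + 1 = n)})"
    by (simp add: sum.If_cases lessThan_def Collect_conj_eq[symmetric])
  also have "card {j. j < n \<and> (j + 1 < m \<or> j + 1 = n)} = min n m"
    unfolding S using False m by (subst card_Un_disjoint) auto
  finally show ?thesis .
qed simp

lemma block_weight_sum:
  assumes m: "m > 0" shows "(\<Sum>j<sum_list ns. block_weight m ns j) = kernel_dim ns m"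
proof (induction ns)
  case Nil then show ?case by (simp add: kernel_dim_def)
next
  case (Cons n ns)
  have "(\<Sum>j<n + sum_list ns. block_weight m (n # ns) j)
     = (\<Sum>j<n. block_weight m (n # ns) j) + (\<Sum>j\<in>{n..<n + sum_list ns}. block_weight m (n # ns) j)"
    unfolding lessThan_atLeast0 by (rule sum.atLeastLessThan_concat[symmetric]) simp_all
  also have "(\<Sum>j<n. block_weight m (n # ns) j) = int (min n m)"
    using single_block_weight[OF m, of n] by simp
  also have "(\<Sum>j\<in>{n..<n + sum_list ns}. block_weight m (n # ns) j) = (\<Sum>j<sum_list ns. block_weight m ns j)"
    using sum.shift_bounds_nat_ivl[of "block_weight m (n # ns)" 0 n "sum_list ns"]
    by (simp add: add.commute lessThan_atLeast0)
  finally show ?case using Cons.IH by (simp add: kernel_dim_def)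
qed

lemma jordan_nilp_entry:
  assumes "i < sum_list ns" "k < sum_list ns" "(jordan_nilp ns :: 'a::zero_neq_one mat) $$ (i, k) \<noteq> 0"
  shows "(jordan_nilp ns :: 'a mat) $$ (i, k) = 1 \<and> k = Suc i \<and>
         block_weight m ns i + block_potential m ns k \<le> block_potential m ns i"
  using assms
proof (induction ns arbitrary: i k)
  case Nil then show ?case by simp
next
  case (Cons n ns)
  have "(jordan_nilp (n # ns) :: 'a mat) = four_block_mat (jordan_block n 0) (0\<^sub>m n (sum_list ns))
       (0\<^sub>m (sum_list ns) n) (jordan_nilp ns)"
    using jordan_matrix_Cons[of n "0::'a" "map (\<lambda>n. (n, 0)) ns"] by (simp add: comp_def)
  then have entry: "(jordan_nilp (n # ns) :: 'a mat) $$ (i, k) =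
      (if i < n then if k < n then jordan_block n (0::'a) $$ (i,k) else 0
       else if k < n then 0 else (jordan_nilp ns :: 'a mat) $$ (i - n, k - n))"
    using Cons.prems(1,2) by (simp add: comp_def)
  consider "i < n" "k < n" | "\<not> i < n" "\<not> k < n" | "(i < n) \<noteq> (k < n)" by blast
  then show ?case
  proof cases
    case 1
    then show ?thesis using entry Cons.prems(3) by (auto split: if_splits)
  next
    case 2
    then have shifted: "(jordan_nilp (n # ns) :: 'a mat) $$ (i, k) = (jordan_nilp ns :: 'a mat) $$ (i - n, k - n)"
      using entry by simp
    then have "(jordan_nilp ns :: 'a mat) $$ (i - n, k - n) = 1 \<and> k - n = Suc (i - n) \<and>
        block_weight m ns (i - n) + block_potential m ns (k - n) \<le> block_potential m ns (i - n)"
      using Cons.IH[of "i - n" "k - n"] Cons.prems 2 by auto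
    then show ?thesis using shifted 2 by auto
  next
    case 3
    then show ?thesis using entry Cons.prems(3) by auto
  qed
qed

lemma char_poly_matrix_entry_wbound:
  fixes B :: "'a::field mat"
  assumes dv: "discrete_valuation nu" and B: "B \<in> carrier_mat d d" and d: "d = sum_list ms"
    and m: "m > 0" and cong: "mat_cong_l nu B (jordan_nilp ms)" and ik: "i < d" "k < d"
  shows "wbound nu (int m) (char_poly_matrix B $$ (i, k))
           (if i = k then 1 else if (jordan_nilp ms :: 'a mat) $$ (i, k) = 0 then int m else 0)"
proof -
  let ?J = "jordan_nilp ms :: 'a mat"
  let ?b = "B $$ (i, k)"
  have entry: "char_poly_matrix B $$ (i, k) = (if i = k then [:- ?b, 1:] else [:- ?b:])"
    using ik B by (simp add: char_poly_matrix_def)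
  have vc: "val_cong nu 1 ?b (?J $$ (i, k))"
    using cong ik B unfolding mat_cong_l_def by auto
  have small: "?b = 0 \<or> 1 \<le> nu ?b" if "?J $$ (i, k) = 0"
    using vc that unfolding val_cong_def by simp
  have small_neg: "- ?b = 0 \<or> 1 \<le> nu (- ?b)" if "?J $$ (i, k) = 0"
    using small[OF that] val_uminus[OF dv] by fastforce
  show ?thesis
  proof (cases "i = k")
    case True
    then have "?J $$ (i, k) = 0" using jordan_nilp_entry[of i ms k] ik d by force
    then show ?thesis using True entry wbound_monic_linear[OF dv _ small] m by simp
  next
    case off: False
    show ?thesis
    proof (cases "?J $$ (i, k) = 0")
      case True
      then show ?thesis
        using off entry wbound_const[where c = "- ?b" and e = 1 and m = "int m" and nu = nu,
            OF small_neg[OF True]]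
        by simp
    next
      case False
      then have "?J $$ (i, k) = 1" using jordan_nilp_entry[of i ms k] ik d by blast
      then have "?b = 0 \<or> 0 \<le> nu ?b" using vc val_cong_one_integral[OF dv] by simp
      then have "- ?b = 0 \<or> 0 \<le> nu (- ?b)" using val_uminus[OF dv] by fastforce
      then show ?thesis
        using off False entry wbound_const[where c = "- ?b" and e = 0 and m = "int m" and nu = nu]
        by simp
    qed
  qed
qed

lemma char_poly_wbound:
  fixes B :: "'a::field mat"
  assumes dv: "discrete_valuation nu" and B: "B \<in> carrier_mat d d" and d: "d = sum_list ms"
    and m: "m > 0" and cong: "mat_cong_l nu B (jordan_nilp ms)"
  shows "wbound nu (int m) (char_poly B) (kernel_dim ms m)"
proof -
  let ?J = "jordan_nilp ms :: 'a mat"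
  define w where "w i k = (if i = k then 1 else if ?J $$ (i, k) = 0 then int m else 0)" for i k
  have potential: "block_weight m ms i + block_potential m ms k - block_potential m ms i \<le> w i k"
    if ik: "i < d" "k < d" for i k
  proof (cases "i \<noteq> k \<and> ?J $$ (i, k) \<noteq> 0")
    case True
    then show ?thesis using jordan_nilp_entry[of i ms k m] ik d unfolding w_def by auto
  next
    case False
    then show ?thesis
      using block_weight_le_one[of m ms i] block_potential_bounds[of m ms k]
        block_potential_bounds[of m ms i] m
      unfolding w_def by (auto simp: of_nat_diff)
  qed
  have entries: "wbound nu (int m) (char_poly_matrix B $$ (i, k)) (w i k)" if "i < d" "k < d" for i k
    using char_poly_matrix_entry_wbound[OF dv B d m cong that] unfolding w_def .
  have "wbound nu (int m) (det (char_poly_matrix B)) (\<Sum>i<d. block_weight m ms i)"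
    by (rule det_wbound[OF dv _ _ entries potential]) (use B in auto)
  then show ?thesis using block_weight_sum[OF m, of ms] d by (simp add: char_poly_def)
qed

lemma reduction_jordan_type_size:
  assumes A: "A \<in> carrier_mat d d" and type: "reduction_jordan_type nu A ms"
  shows "d = sum_list ms"
proof -
  from type obtain P Pi where "P \<in> carrier_mat d d" "Pi \<in> carrier_mat d d"
    and "mat_cong_l nu (Pi * A * P) (jordan_nilp ms)"
    unfolding reduction_jordan_type_def using A by auto
  then show ?thesis unfolding mat_cong_l_def by (simp add: comp_def)
qed

lemma char_poly_wbound_reduction_type:
  fixes A :: "'a::field mat"
  assumes dv: "discrete_valuation nu" and A: "A \<in> carrier_mat d d"
    and type: "reduction_jordan_type nu A ms" and m: "m > 0"
  shows "wbound nu (int m) (char_poly A) (kernel_dim ms m)"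
proof -
  from type obtain P Pi where P: "P \<in> carrier_mat d d" and Pi: "Pi \<in> carrier_mat d d"
    and inv: "P * Pi = 1\<^sub>m d" and cong: "mat_cong_l nu (Pi * A * P) (jordan_nilp ms)"
    unfolding reduction_jordan_type_def using A by auto
  have d: "d = sum_list ms" using reduction_jordan_type_size[OF A type] .
  have "Pi * P = 1\<^sub>m d" by (rule mat_mult_left_right_inverse[OF P Pi inv])
  moreover have "P * (Pi * A * P) * Pi = (P * Pi) * A * (P * Pi)"
    using P Pi A by (simp add: assoc_mult_mat[of _ d d _ d _ d])
  ultimately have "similar_mat A (Pi * A * P)"
    using A P Pi inv unfolding similar_mat_def similar_mat_wit_def
    by (intro exI[of _ P] exI[of _ Pi]) (auto simp: Let_def)
  then have "char_poly A = char_poly (Pi * A * P)" by (rule char_poly_similar)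
  then show ?thesis using char_poly_wbound[OF dv _ d m cong] P Pi A by simp
qed

section \<open>Lines below the Newton polygon and above the Young polygon\<close>

text \<open>The line of slope 1/m on which the weighted bound for m puts the Newton polygon.\<close>
definition young_line :: "nat list \<Rightarrow> nat \<Rightarrow> real \<Rightarrow> real" where
  "young_line ns m s = (real_of_int (kernel_dim ns m) - real (sum_list ns) + s) / real m"

lemma young_line_affine:
  "young_line ns m ((1 - t) * x + t * y) = (1 - t) * young_line ns m x + t * young_line ns m y"
  unfolding young_line_def by (cases "m = 0") (simp_all add: field_simps)

lemma kernel_dim_large: "\<forall>b\<in>set ns. b \<le> m \<Longrightarrow> kernel_dim ns m = int (sum_list ns)"
  unfolding kernel_dim_def by (induction ns) auto

text \<open>Each segment of the Young polygon lies on the line of slope 1/m for its block size m;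
  hence the polygon is bounded by one of these lines at every point of [0, d].\<close>
lemma young_polygon_le_line:
  assumes "sorted_wrt (\<ge>) ms" "\<forall>x\<in>set ms. x > 0" "ms \<noteq> []" "0 \<le> s" "s \<le> real (sum_list ms)"
  shows "\<exists>m\<in>set ms. young_polygon ms s \<le> young_line ms m s"
  using assms
proof (induction ms arbitrary: s)
  case Nil then show ?case by simp
next
  case (Cons n ns)
  have sorted: "\<forall>b\<in>set ns. b \<le> n" "sorted_wrt (\<ge>) ns" using Cons.prems(1) by auto
  show ?case
  proof (cases "s \<le> real n")
    case True
    then have "young_line (n # ns) n s = s / real n"
      using kernel_dim_large[of "n # ns" n] sorted(1) unfolding young_line_def by simp
    then show ?thesis using True by auto
  next
    case False
    then have "ns \<noteq> []" using Cons.prems(5) by auto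
    then obtain m where m: "m \<in> set ns" "young_polygon ns (s - real n) \<le> young_line ns m (s - real n)"
      using Cons.IH[OF sorted(2) _ _, of "s - real n"] Cons.prems False by auto
    then have "m \<le> n" "m > 0" using sorted(1) Cons.prems(2) by auto
    then have "young_line (n # ns) m s = 1 + young_line ns m (s - real n)"
      unfolding young_line_def kernel_dim_def by (simp add: field_simps)
    then show ?thesis using m False by (intro bexI[of _ m]) auto
  qed
qed

lemma young_line_convex: "convex S \<Longrightarrow> convex_on S (young_line ns m)"
  by (rule convex_onI) (simp_all add: young_line_affine)

lemma convex_on_Max:
  fixes f :: "'i \<Rightarrow> 'a::real_vector \<Rightarrow> real"
  assumes fin: "finite I" "I \<noteq> {}" and conv: "\<And>i. i \<in> I \<Longrightarrow> convex_on S (f i)"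
  shows "convex_on S (\<lambda>x. Max ((\<lambda>i. f i x) ` I))"
proof (rule convex_onI)
  show "convex S" using conv fin(2) convex_on_imp_convex by blast
next
  fix t :: real and x y assume t: "0 < t" "t < 1" and xy: "x \<in> S" "y \<in> S"
  have "f i ((1 - t) *\<^sub>R x + t *\<^sub>R y)
          \<le> (1 - t) * Max ((\<lambda>i. f i x) ` I) + t * Max ((\<lambda>i. f i y) ` I)" if i: "i \<in> I" for i
  proof -
    have "f i ((1 - t) *\<^sub>R x + t *\<^sub>R y) \<le> (1 - t) * f i x + t * f i y"
      using conv[OF i] t xy by (simp add: convex_onD)
    also have "\<dots> \<le> (1 - t) * Max ((\<lambda>i. f i x) ` I) + t * Max ((\<lambda>i. f i y) ` I)"
      using t fin i by (intro add_mono mult_left_mono) auto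
    finally show ?thesis .
  qed
  then show "Max ((\<lambda>i. f i ((1 - t) *\<^sub>R x + t *\<^sub>R y)) ` I)
               \<le> (1 - t) * Max ((\<lambda>i. f i x) ` I) + t * Max ((\<lambda>i. f i y) ` I)"
    using fin by simp
qed

lemma newton_polygon_ge:
  assumes "convex_on {0..real (degree Q)} phi"
    and "\<forall>i \<le> degree Q. coeff Q (degree Q - i) \<noteq> 0 \<longrightarrow>
           phi (real i) \<le> real_of_int (nu (coeff Q (degree Q - i)))"
  shows "ereal (phi s) \<le> newton_polygon nu Q s"
  unfolding newton_polygon_def by (rule SUP_upper2[of phi]) (use assms in auto)

lemma wbound_line_below_coeff:
  assumes wb: "wbound nu (int m) Q K" and m: "m > 0"
    and i: "i \<le> degree Q" and nz: "coeff Q (degree Q - i) \<noteq> 0"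
  shows "(real_of_int K - real (degree Q) + real i) / real m \<le> real_of_int (nu (coeff Q (degree Q - i)))"
proof -
  have "K \<le> int m * nu (coeff Q (degree Q - i)) + int (degree Q - i)"
    using wb nz unfolding wbound_def by blast
  then have "K - int (degree Q) + int i \<le> int m * nu (coeff Q (degree Q - i))"
    using i by (simp add: of_nat_diff)
  then have "real_of_int (K - int (degree Q) + int i) \<le> real_of_int (int m * nu (coeff Q (degree Q - i)))"
    by (simp only: of_int_le_iff)
  then have "real_of_int K - real (degree Q) + real i \<le> real m * real_of_int (nu (coeff Q (degree Q - i)))"
    by simp
  then show ?thesis using m by (simp add: pos_divide_le_eq mult.commute)
qed

text \<open>The theorem only needs a discrete valuation: phi, the maximum of the lines for the
  block sizes (and for 1), is convex, lies below the points (i, nu(Q_i)) and above Hp.\<close>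
theorem newton_polygon_above_young_polygon:
  fixes nu :: "'a::field \<Rightarrow> int" and A :: "'a mat"
  assumes dv: "discrete_valuation nu" and A: "A \<in> carrier_mat d d"
    and type: "reduction_jordan_type nu A ms" and s: "s \<in> {0..real d}"
  shows "ereal (young_polygon ms s) \<le> newton_polygon nu (char_poly A) s"
proof -
  have sorted: "sorted_wrt (\<ge>) ms" and pos: "\<forall>m \<in> set ms. m > 0"
    using type unfolding reduction_jordan_type_def by blast+
  have d: "d = sum_list ms" using reduction_jordan_type_size[OF A type] .
  have deg: "degree (char_poly A) = d" using degree_monic_char_poly[OF A] by simp
  text \<open>The weight 1 is added only to have a nonempty family when ms is empty.\<close>
  define M where "M = insert 1 (set ms)"
  have M: "finite M" "M \<noteq> {}" "\<And>m. m \<in> M \<Longrightarrow> m > 0" using pos unfolding M_def by auto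
  define phi where "phi x = Max ((\<lambda>m. young_line ms m x) ` M)" for x
  have "convex_on {0..real (degree (char_poly A))} phi"
    unfolding phi_def by (rule convex_on_Max[OF M(1,2) young_line_convex]) simp
  moreover have "phi (real i) \<le> real_of_int (nu (coeff (char_poly A) (degree (char_poly A) - i)))"
    if i: "i \<le> degree (char_poly A)" and nz: "coeff (char_poly A) (degree (char_poly A) - i) \<noteq> 0" for i
  proof -
    have "young_line ms m (real i) \<le> real_of_int (nu (coeff (char_poly A) (degree (char_poly A) - i)))"
      if m: "m \<in> M" for m
      using wbound_line_below_coeff[OF char_poly_wbound_reduction_type[OF dv A type M(3)[OF m]]
          M(3)[OF m] i nz] d deg
      unfolding young_line_def by simp
    then show ?thesis unfolding phi_def using M(1,2) by simp
  qed
  moreover have "young_polygon ms s \<le> phi s"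
  proof (cases "ms = []")
    case True
    then have "young_polygon ms s = young_line ms 1 s"
      using s d unfolding young_line_def kernel_dim_def by simp
    then show ?thesis unfolding phi_def M_def by simp
  next
    case False
    then obtain m where "m \<in> set ms" "young_polygon ms s \<le> young_line ms m s"
      using young_polygon_le_line[OF sorted pos] s d by auto
    then show ?thesis unfolding phi_def M_def by (auto intro: order_trans[OF _ Max_ge])
  qed
  ultimately have "ereal (young_polygon ms s) \<le> ereal (phi s)"
    and "ereal (phi s) \<le> newton_polygon nu (char_poly A) s"
    by (auto intro: newton_polygon_ge)
  then show ?thesis by (rule order_trans)
qed

theorem mainTheorem2:
  fixes l :: nat and nu :: "'a::field_char_0 \<Rightarrow> int" and d :: nat
    and A :: "'a mat" and ms :: "nat list"
  assumes "unramified_l_adic_field l nu"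
    and "A \<in> carrier_mat d d"
    and "integral_mat nu A"
    and "reduction_nilpotent nu A"
    and "reduction_jordan_type nu A ms"
  shows "\<forall>s \<in> {0..real d}. newton_polygon nu (char_poly A) s \<ge> ereal (young_polygon ms s)"
proof -
  have "discrete_valuation nu"
    using assms(1) unfolding unramified_l_adic_field_def by blast
  then show ?thesis using newton_polygon_above_young_polygon assms(2,5) by blast
qed

end
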